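(* Fix a block $i\in\{1,\dots,N\}$, a battery state $\epsilon$ and a G-channel state $\gamma_G$. If $\gamma_H^-\le\gamma_H^+$ are H-channel states and the action $\alpha=1$ is optimal in block $i$ at state $\langle\epsilon,\gamma_G,\gamma_H^-\rangle$, then $\alpha=1$ is optimal in block $i$ at state $\langle\epsilon,\gamma_G,\gamma_H^+\rangle$. Equivalently, the optimal policy is monotone in $\gamma_H$: there is a threshold $\Gamma_{H,i}(\epsilon,\gamma_G)$ such that the EH-BS is assigned ($\alpha=1$) only when $\gamma_H\ge\Gamma_{H,i}(\epsilon,\gamma_G)$.
   Context: Finite-horizon MDP with $N$ blocks of length $\tau>0$. Parameters: $B_m>0$, positive integers $M,K$; channel levels $0<H_1<\dots<H_K$; $R,W,\sigma^2,g_0,\theta,d_G,d_H>0$; $p_G^{\max},p_H^{\max}>0$; weights $w_G,w_D>0$; $E_{H}$ a random variable with density $f_{E_H}$ on $[0,E_m]$. A state is $s=\langle\epsilon,\gamma_G,\gamma_H\rangle$ with $\epsilon\in\{(2m-1)B_m/(2M): m=1,\dots,M\}$ and $\gamma_G,\gamma_H\in\{H_1,\dots,H_K\}$. Let $p^{inv}_j(s)=(2^{R/(W\tau)}-1)\sigma^2(g_0 d_j^{-\theta}\gamma_j)^{-1}$ for $j\in\{G,H\}$, $\kappa=\min\{p_G^{\max},w_D(w_G\tau)^{-1}\}$, and $c(s)=w_D$ if $p^{inv}_G(s)>\kappa$, $c(s)=w_G p^{inv}_G(s)\tau$ otherwise. The allowable actions are $\mathcal{A}_s=\{0\}$ if $p^{inv}_H(s)>\min\{\epsilon/\tau,p_H^{\max}\}$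 and $\mathcal{A}_s=\{0,1\}$ otherwise; the cost is $c(s,\alpha)=(1-\alpha)c(s)$. Transitions: given $s$ and $\alpha$, the next channel states $\gamma_G',\gamma_H'$ are independent, each uniform on $\{H_1,\dots,H_K\}$, independent of the next energy state $\epsilon'=Q(\epsilon-\alpha p^{inv}_H(s)\tau+E_H)$, where $Q(\varepsilon)=\big(2\min\{\lfloor M\min\{\varepsilon,B_m\}/B_m\rfloor+1,M\}-1\big)B_m/(2M)$; denote the resulting transition probability $p(s'|s,\alpha)$. Optimal cost-to-go functions: $u_N^*(s)=\min_{\alpha\in\mathcal{A}_s}c(s,\alpha)$ and, for $i<N$, $u_i^*(s)=\min_{\alpha\in\mathcal{A}_s}\{c(s,\alpha)+\sum_{s'}p(s'|s,\alpha)u_{i+1}^*(s')\}$. Action $\alpha$ is optimal in block $i$ at state $s$ if $\alpha\in\mathcal{A}_s$ and it attains the minimum in the defining equation of $u_i^*(s)$. *)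

theory Defs
  imports "HOL-Analysis.Analysis"
begin

record mdp_params =
  pN :: nat            (* number of blocks *)
  ptau :: real         (* block length *)
  pBm :: real          (* battery capacity B_m *)
  pM :: nat            (* number of battery levels *)
  pK :: nat            (* number of channel levels *)
  pH :: "nat \<Rightarrow> real"
  pR :: real
  pW :: real
  psigma2 :: real
  pg0 :: real
  ptheta :: real
  pdG :: real
  pdH :: real
  ppGmax :: real
  ppHmax :: real
  pwG :: real
  pwD :: real
  pEm :: real
  pf :: "real \<Rightarrow> real"

definition valid_params :: "mdp_params \<Rightarrow> bool" where
  "valid_params P \<longleftrightarrow>
     pN P \<ge> 1 \<and> ptau P > 0 \<and> pBm P > 0 \<and> pM P \<ge> 1 \<and> pK P \<ge> 1 \<and>
     0 < pH P 1 \<and> (\<forall>k\<in>{1..pK P}. \<forall>l\<in>{1..pK P}. k < l \<longrightarrow> pH P k < pH P l) \<and>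
     pR P > 0 \<and> pW P > 0 \<and> psigma2 P > 0 \<and> pg0 P > 0 \<and> ptheta P > 0 \<and>
     pdG P > 0 \<and> pdH P > 0 \<and> ppGmax P > 0 \<and> ppHmax P > 0 \<and>
     pwG P > 0 \<and> pwD P > 0 \<and> pEm P > 0 \<and>
     pf P \<in> borel_measurable lborel \<and> (\<forall>t. 0 \<le> pf P t) \<and>
     (\<forall>t. t \<notin> {0..pEm P} \<longrightarrow> pf P t = 0) \<and>
     integrable lborel (pf P) \<and> integral\<^sup>L lborel (pf P) = 1"

type_synonym state = "real \<times> real \<times> real"  (* \<langle>\<epsilon>, \<gamma>_G, \<gamma>_H\<rangle> *)

definition energy_levels :: "mdp_params \<Rightarrow> real set" where
  "energy_levels P = {(2 * real m - 1) * pBm P / (2 * real (pM P)) | m. m \<in> {1..pM P}}"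

definition chan_levels :: "mdp_params \<Rightarrow> real set" where
  "chan_levels P = pH P ` {1..pK P}"

definition states :: "mdp_params \<Rightarrow> state set" where
  "states P = energy_levels P \<times> chan_levels P \<times> chan_levels P"

definition pinvG :: "mdp_params \<Rightarrow> state \<Rightarrow> real" where
  "pinvG P s = (case s of (e, gG, gH) \<Rightarrow>
     (2 powr (pR P / (pW P * ptau P)) - 1) * psigma2 P
       / (pg0 P * pdG P powr (- ptheta P) * gG))"

definition pinvH :: "mdp_params \<Rightarrow> state \<Rightarrow> real" where
  "pinvH P s = (case s of (e, gG, gH) \<Rightarrow>
     (2 powr (pR P / (pW P * ptau P)) - 1) * psigma2 P
       / (pg0 P * pdH P powr (- ptheta P) * gH))"

definition kappa :: "mdp_params \<Rightarrow> real" where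
  "kappa P = min (ppGmax P) (pwD P / (pwG P * ptau P))"

definition cbase :: "mdp_params \<Rightarrow> state \<Rightarrow> real" where
  "cbase P s = (if pinvG P s > kappa P then pwD P else pwG P * pinvG P s * ptau P)"

definition actions :: "mdp_params \<Rightarrow> state \<Rightarrow> nat set" where
  "actions P s = (case s of (e, gG, gH) \<Rightarrow>
     if pinvH P s > min (e / ptau P) (ppHmax P) then {0} else {0, 1})"

definition cost :: "mdp_params \<Rightarrow> state \<Rightarrow> nat \<Rightarrow> real" where
  "cost P s a = (1 - real a) * cbase P s"

definition Qz :: "mdp_params \<Rightarrow> real \<Rightarrow> real" where
  "Qz P x = (2 * of_int (min (\<lfloor>real (pM P) * min x (pBm P) / pBm P\<rfloor> + 1) (int (pM P))) - 1)
              * pBm P / (2 * real (pM P))"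

definition energy_prob :: "mdp_params \<Rightarrow> real \<Rightarrow> real \<Rightarrow> real" where
  "energy_prob P x e = (LINT t:{t. Qz P (x + t) = e}|lborel. pf P t)"

definition trans :: "mdp_params \<Rightarrow> state \<Rightarrow> nat \<Rightarrow> state \<Rightarrow> real" where
  "trans P s a s' = (case s of (e, gG, gH) \<Rightarrow> case s' of (e', gG', gH') \<Rightarrow>
     (1 / real (pK P)) * (1 / real (pK P))
       * energy_prob P (e - real a * pinvH P s * ptau P) e')"

text \<open>Vto P k s is the optimal cost-to-go with k blocks remaining after the current one,
  i.e. u_{N-k}^*(s).\<close>
fun Vto :: "mdp_params \<Rightarrow> nat \<Rightarrow> state \<Rightarrow> real" where
  "Vto P 0 s = Min ((\<lambda>a. cost P s a) ` actions P s)"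
| "Vto P (Suc k) s = Min ((\<lambda>a. cost P s a + (\<Sum>s'\<in>states P. trans P s a s' * Vto P k s'))
                          ` actions P s)"

definition u :: "mdp_params \<Rightarrow> nat \<Rightarrow> state \<Rightarrow> real" where
  "u P i s = Vto P (pN P - i) s"

definition qval :: "mdp_params \<Rightarrow> nat \<Rightarrow> state \<Rightarrow> nat \<Rightarrow> real" where
  "qval P i s a = (if i < pN P
     then cost P s a + (\<Sum>s'\<in>states P. trans P s a s' * u P (Suc i) s')
     else cost P s a)"

definition optimal :: "mdp_params \<Rightarrow> nat \<Rightarrow> state \<Rightarrow> nat \<Rightarrow> bool" where
  "optimal P i s a \<longleftrightarrow> a \<in> actions P s \<and> qval P i s a = u P i s"

end

theory Submission
  imports Defs
begin

text \<open>
  The H-channel state enters the problem only through the transmit power \<open>p_H^inv\<close>, which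
  decreases as \<open>\<gamma>_H\<close> grows. The immediate costs of both actions and the continuation value of
  \<open>\<alpha> = 0\<close> do not depend on \<open>\<gamma>_H\<close>. Since the quantiser \<open>Q\<close> is monotone, backward
  induction shows that every cost-to-go function is nonincreasing in the battery level; so
  assigning the EH-BS on a better H-channel is still feasible, leaves more energy in the battery,
  and therefore has a continuation value no larger than on the worse channel. Hence if
  \<open>\<alpha> = 1\<close> beats \<open>\<alpha> = 0\<close> at \<open>\<gamma>_H^-\<close>, it does so at \<open>\<gamma>_H^+\<close>.
\<close>

lemma Qz_measurable [measurable]: "Qz P \<in> borel_measurable borel"
  unfolding Qz_def by measurable

lemma Qz_mono:
  assumes "0 \<le> pBm P" "z1 \<le> z2"
  shows "Qz P z1 \<le> Qz P z2"
proof -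
  let ?k = "\<lambda>z. min (\<lfloor>real (pM P) * min z (pBm P) / pBm P\<rfloor> + 1) (int (pM P))"
  have "real (pM P) * min z1 (pBm P) / pBm P \<le> real (pM P) * min z2 (pBm P) / pBm P"
    using assms by (intro divide_right_mono mult_left_mono) auto
  then have "?k z1 \<le> ?k z2"
    by (metis add_right_mono floor_mono min.mono order_refl)
  then show ?thesis
    unfolding Qz_def using assms(1) by (intro divide_right_mono mult_right_mono) auto
qed

lemma Qz_in_energy_levels:
  assumes "0 \<le> pBm P" "1 \<le> pM P" "0 \<le> z"
  shows "Qz P z \<in> energy_levels P"
proof -
  define k where "k = min (\<lfloor>real (pM P) * min z (pBm P) / pBm P\<rfloor> + 1) (int (pM P))"
  have "k \<ge> 1" "k \<le> int (pM P)"
    unfolding k_def using assms by auto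
  moreover have "Qz P z = (2 * real (nat k) - 1) * pBm P / (2 * real (pM P))"
    unfolding Qz_def k_def[symmetric] using \<open>k \<ge> 1\<close> by simp
  ultimately show ?thesis
    unfolding energy_levels_def by (intro CollectI exI[of _ "nat k"]) auto
qed

lemma finite_energy_levels: "finite (energy_levels P)"
proof -
  have "energy_levels P = (\<lambda>m. (2 * real m - 1) * pBm P / (2 * real (pM P))) ` {1..pM P}"
    unfolding energy_levels_def by auto
  then show ?thesis by simp
qed

lemma energy_levels_nonneg: "0 \<le> pBm P \<Longrightarrow> e \<in> energy_levels P \<Longrightarrow> 0 \<le> e"
  unfolding energy_levels_def by auto

lemma chan_levels_pos:
  assumes "valid_params P" "g \<in> chan_levels P"
  shows "0 < g"
proof -
  obtain k where k: "k \<in> {1..pK P}" "g = pH P k"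
    using assms(2) unfolding chan_levels_def by auto
  have "0 < pH P 1" and "1 \<le> pK P"
    and increasing: "\<forall>k\<in>{1..pK P}. \<forall>l\<in>{1..pK P}. k < l \<longrightarrow> pH P k < pH P l"
    using assms(1) unfolding valid_params_def by auto
  then have "pH P 1 \<le> pH P k"
  proof (cases "k = 1")
    case False
    with k(1) \<open>1 \<le> pK P\<close> show ?thesis
      by (intro less_imp_le increasing[rule_format]) auto
  qed simp
  with \<open>0 < pH P 1\<close> k show ?thesis by simp
qed

definition energy_expectation :: "mdp_params \<Rightarrow> (real \<Rightarrow> real) \<Rightarrow> real \<Rightarrow> real" where
  "energy_expectation P W x = (\<Sum>e'\<in>energy_levels P. energy_prob P x e' * W e')"

lemma energy_prob_times_eq_integral:
  "energy_prob P x e' * c = (\<integral>t. indicator {t. Qz P (x + t) = e'} t * pf P t * c \<partial>lborel)"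
  unfolding energy_prob_def set_lebesgue_integral_def by simp

lemma integrable_energy_prob_piece:
  assumes "valid_params P"
  shows "integrable lborel (\<lambda>t. indicator {t. Qz P (x + t) = e'} t * pf P t * c)"
proof -
  have "integrable lborel (\<lambda>t. pf P t * indicator {t. Qz P (x + t) = e'} t)"
    using assms unfolding valid_params_def by (intro integrable_real_mult_indicator) auto
  then show ?thesis
    using integrable_mult_left by (simp add: mult_ac)
qed

lemma sum_energy_levels_indicator:
  assumes "valid_params P" "0 \<le> x"
  shows "(\<Sum>e'\<in>energy_levels P. indicator {t. Qz P (x + t) = e'} t * pf P t * W e')
       = pf P t * W (Qz P (x + t))"
proof (cases "pf P t = 0")
  case False
  then have "0 \<le> t"
    using assms(1) unfolding valid_params_def by auto
  with assms have "Qz P (x + t) \<in> energy_levels P"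
    unfolding valid_params_def by (intro Qz_in_energy_levels) auto
  have "(\<Sum>e'\<in>energy_levels P. indicator {t. Qz P (x + t) = e'} t * pf P t * W e')
      = (\<Sum>e'\<in>energy_levels P. if Qz P (x + t) = e' then pf P t * W e' else 0)"
    by (intro sum.cong) (auto simp: indicator_def)
  with \<open>Qz P (x + t) \<in> energy_levels P\<close> show ?thesis
    using finite_energy_levels by (simp add: sum.delta)
qed simp

lemma energy_expectation_eq_integral:
  assumes "valid_params P" "0 \<le> x"
  shows "energy_expectation P W x = (\<integral>t. pf P t * W (Qz P (x + t)) \<partial>lborel)"
    and "integrable lborel (\<lambda>t. pf P t * W (Qz P (x + t)))"
proof -
  let ?piece = "\<lambda>e' t. indicator {t. Qz P (x + t) = e'} t * pf P t * W e'"
  have "energy_expectation P W x = (\<Sum>e'\<in>energy_levels P. \<integral>t. ?piece e' t \<partial>lborel)"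
    unfolding energy_expectation_def by (simp add: energy_prob_times_eq_integral)
  also have "\<dots> = (\<integral>t. (\<Sum>e'\<in>energy_levels P. ?piece e' t) \<partial>lborel)"
    by (rule Bochner_Integration.integral_sum[where f = ?piece, symmetric])
      (rule integrable_energy_prob_piece[OF assms(1)])
  finally show "energy_expectation P W x = (\<integral>t. pf P t * W (Qz P (x + t)) \<partial>lborel)"
    using sum_energy_levels_indicator[OF assms] by simp
  have "integrable lborel (\<lambda>t. \<Sum>e'\<in>energy_levels P. ?piece e' t)"
    by (rule Bochner_Integration.integrable_sum) (rule integrable_energy_prob_piece[OF assms(1)])
  then show "integrable lborel (\<lambda>t. pf P t * W (Qz P (x + t)))"
    using sum_energy_levels_indicator[OF assms] by simp
qed

lemma energy_expectation_antimono:
  assumes "valid_params P" "0 \<le> x" "x \<le> y"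
    and antimono_W: "\<And>a b. a \<in> energy_levels P \<Longrightarrow> b \<in> energy_levels P \<Longrightarrow> a \<le> b \<Longrightarrow> W b \<le> W a"
  shows "energy_expectation P W y \<le> energy_expectation P W x"
proof -
  have "0 \<le> y" using assms(2,3) by linarith
  have "pf P t * W (Qz P (y + t)) \<le> pf P t * W (Qz P (x + t))" for t
  proof (cases "pf P t = 0")
    case False
    then have "0 \<le> t" "0 \<le> pf P t"
      using assms(1) unfolding valid_params_def by auto
    moreover have "0 \<le> pBm P" "1 \<le> pM P"
      using assms(1) unfolding valid_params_def by auto
    ultimately show ?thesis
      using assms(2,3) by (intro mult_left_mono antimono_W Qz_in_energy_levels Qz_mono) auto
  qed simp
  then show ?thesis
    using assms(1,2) \<open>0 \<le> y\<close>
    by (simp add: energy_expectation_eq_integral integral_mono)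
qed

definition channel_average :: "mdp_params \<Rightarrow> (state \<Rightarrow> real) \<Rightarrow> real \<Rightarrow> real" where
  "channel_average P V e =
     1 / real (pK P) * (1 / real (pK P)) * (\<Sum>g\<in>chan_levels P. \<Sum>h\<in>chan_levels P. V (e, g, h))"

lemma channel_average_antimono:
  assumes "\<And>g h. h \<in> chan_levels P \<Longrightarrow> V (e2, g, h) \<le> V (e1, g, h)"
  shows "channel_average P V e2 \<le> channel_average P V e1"
  unfolding channel_average_def using assms by (intro mult_left_mono sum_mono) auto

lemma sum_trans_eq_energy_expectation:
  "(\<Sum>s'\<in>states P. trans P (e, g, h) a s' * V s')
     = energy_expectation P (channel_average P V) (e - real a * pinvH P (e, g, h) * ptau P)"
proof -
  have "(\<Sum>s'\<in>states P. trans P (e, g, h) a s' * V s')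
      = (\<Sum>e'\<in>energy_levels P. \<Sum>g'\<in>chan_levels P. \<Sum>h'\<in>chan_levels P.
           trans P (e, g, h) a (e', g', h') * V (e', g', h'))"
    unfolding states_def by (simp add: sum.cartesian_product')
  then show ?thesis
    unfolding energy_expectation_def channel_average_def
    by (simp add: sum_distrib_left trans_def mult_ac)
qed

lemma Min_image_le_Min_image:
  assumes "finite A" "B \<subseteq> A" "B \<noteq> {}" "\<And>b. b \<in> B \<Longrightarrow> g b \<le> f b"
  shows "Min (g ` A) \<le> Min (f ` B)"
proof (rule Min.boundedI)
  show "finite (f ` B)"
    using assms(1,2) by (metis finite_subset finite_imageI)
  show "f ` B \<noteq> {}"
    using assms(3) by simp
next
  fix y assume "y \<in> f ` B"
  then obtain b where "b \<in> B" "y = f b" by blast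
  then show "Min (g ` A) \<le> y"
    using assms by (meson Min_le finite_imageI image_eqI order_trans subsetD)
qed

lemma actions_subset: "actions P s \<subseteq> {0, 1}"
  unfolding actions_def by (cases s) auto

lemma zero_in_actions: "0 \<in> actions P s"
  unfolding actions_def by (cases s) auto

lemma one_in_actions_iff:
  "1 \<in> actions P (e, g, h) \<longleftrightarrow> pinvH P (e, g, h) \<le> min (e / ptau P) (ppHmax P)"
  unfolding actions_def by auto

lemma Min_image_actions:
  "Min (q ` actions P s) = (if 1 \<in> actions P s then min (q 0) (q 1) else q 0)"
  unfolding actions_def by (cases s) auto

lemma pinvH_antimono:
  assumes "valid_params P" "0 < h1" "h1 \<le> h2"
  shows "pinvH P (e2, g2, h2) \<le> pinvH P (e1, g1, h1)"
proof -
  let ?C = "(2 powr (pR P / (pW P * ptau P)) - 1) * psigma2 P"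
  let ?D = "pg0 P * pdH P powr (- ptheta P)"
  have "0 < pR P / (pW P * ptau P)" "0 < psigma2 P" "0 < ?D"
    using assms(1) unfolding valid_params_def by auto
  then have "0 \<le> ?C"
    by (simp add: ge_one_powr_ge_zero less_imp_le)
  with \<open>0 < ?D\<close> assms(2,3) have "?C / (?D * h2) \<le> ?C / (?D * h1)"
    by (intro divide_left_mono mult_left_mono) (simp_all add: zero_less_mult_iff)
  then show ?thesis
    unfolding pinvH_def by simp
qed

lemma actions_mono:
  assumes "valid_params P" "e1 \<le> e2" "0 < h1" "h1 \<le> h2"
  shows "actions P (e1, g, h1) \<subseteq> actions P (e2, g, h2)"
proof -
  have "e1 / ptau P \<le> e2 / ptau P"
    using assms(1,2) unfolding valid_params_def by (simp add: divide_right_mono)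
  with pinvH_antimono[OF assms(1,3,4)]
  have "1 \<in> actions P (e2, g, h2)" if "1 \<in> actions P (e1, g, h1)"
    using that unfolding one_in_actions_iff by (meson min.mono order_refl order_trans)
  then show ?thesis
    using actions_subset[of P "(e1, g, h1)"] zero_in_actions by blast
qed

lemma residual_energy_nonneg:
  assumes "valid_params P" "0 \<le> e" "a \<in> actions P (e, g, h)"
  shows "0 \<le> e - real a * pinvH P (e, g, h) * ptau P"
proof (cases "a = 0")
  case False
  with assms(3) actions_subset have "a = 1" by blast
  with assms(3) have "1 \<in> actions P (e, g, h)" by simp
  then have "pinvH P (e, g, h) \<le> e / ptau P"
    unfolding one_in_actions_iff by simp
  with assms(1) \<open>a = 1\<close> show ?thesis
    unfolding valid_params_def by (simp add: field_simps)
qed (use assms(2) in simp)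

lemma cost_indep_energy_chanH: "cost P (e1, g, h1) a = cost P (e2, g, h2) a"
  unfolding cost_def cbase_def pinvG_def by simp

definition bellman_q :: "mdp_params \<Rightarrow> (state \<Rightarrow> real) \<Rightarrow> state \<Rightarrow> nat \<Rightarrow> real" where
  "bellman_q P V s a = cost P s a + (\<Sum>s'\<in>states P. trans P s a s' * V s')"

lemma bellman_q_antimono:
  assumes "valid_params P"
    and antimono_V: "\<And>e1 e2 g h. 0 \<le> e1 \<Longrightarrow> e1 \<le> e2 \<Longrightarrow> h \<in> chan_levels P \<Longrightarrow> V (e2, g, h) \<le> V (e1, g, h)"
    and "0 \<le> e1" "e1 \<le> e2" "0 < h1" "h1 \<le> h2" "a \<in> actions P (e1, g, h1)"
  shows "bellman_q P V (e2, g, h2) a \<le> bellman_q P V (e1, g, h1) a"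
proof -
  let ?x = "\<lambda>e h. e - real a * pinvH P (e, g, h) * ptau P"
  have "0 \<le> ptau P" "0 \<le> pBm P"
    using assms(1) unfolding valid_params_def by auto
  have "real a * pinvH P (e2, g, h2) * ptau P \<le> real a * pinvH P (e1, g, h1) * ptau P"
    using pinvH_antimono[OF assms(1,5,6)] \<open>0 \<le> ptau P\<close> by (intro mult_right_mono mult_left_mono) auto
  then have "?x e1 h1 \<le> ?x e2 h2"
    using assms(4) by linarith
  moreover have "channel_average P V b \<le> channel_average P V a'"
    if "a' \<in> energy_levels P" "b \<in> energy_levels P" "a' \<le> b" for a' b
    using that energy_levels_nonneg[OF \<open>0 \<le> pBm P\<close> that(1)]
    by (intro channel_average_antimono antimono_V) auto
  ultimately have "energy_expectation P (channel_average P V) (?x e2 h2)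
      \<le> energy_expectation P (channel_average P V) (?x e1 h1)"
    using residual_energy_nonneg[OF assms(1,3,7)] by (intro energy_expectation_antimono[OF assms(1)])
  then show ?thesis
    unfolding bellman_q_def sum_trans_eq_energy_expectation
    using cost_indep_energy_chanH[of P e2 g h2 a e1 h1] by simp
qed

lemma Vto_Suc_eq_bellman_q: "Vto P (Suc k) s = Min (bellman_q P (Vto P k) s ` actions P s)"
  by (simp add: bellman_q_def)

lemma finite_actions: "finite (actions P s)"
  using actions_subset finite_subset by blast

lemma Vto_antimono:
  assumes "valid_params P" "0 \<le> e1" "e1 \<le> e2" "0 < h1" "h1 \<le> h2"
  shows "Vto P k (e2, g, h2) \<le> Vto P k (e1, g, h1)"
  using assms(2-)
proof (induction k arbitrary: e1 e2 g h1 h2)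
  case 0
  show ?case
    unfolding Vto.simps
    by (rule Min_image_le_Min_image[OF finite_actions actions_mono[OF assms(1) "0.prems"(2-4)]])
      (use zero_in_actions[of P "(e1, g, h1)"] cost_indep_energy_chanH[of P e2 g h2 _ e1 h1] in auto)
next
  case (Suc k)
  have "Vto P k (e2', g', h) \<le> Vto P k (e1', g', h)"
    if "0 \<le> e1'" "e1' \<le> e2'" "h \<in> chan_levels P" for e1' e2' g' h
    using Suc.IH that chan_levels_pos[OF assms(1)] by blast
  then have bellman_le: "bellman_q P (Vto P k) (e2, g, h2) a \<le> bellman_q P (Vto P k) (e1, g, h1) a"
    if "a \<in> actions P (e1, g, h1)" for a
    using bellman_q_antimono[OF assms(1)] Suc.prems that by blast
  show ?case
    unfolding Vto_Suc_eq_bellman_q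
    by (rule Min_image_le_Min_image[OF finite_actions actions_mono[OF assms(1) Suc.prems(2-4)]])
      (use zero_in_actions[of P "(e1, g, h1)"] bellman_le in auto)
qed

lemma qval_antimono:
  assumes "valid_params P" "0 \<le> e1" "e1 \<le> e2" "0 < h1" "h1 \<le> h2" "a \<in> actions P (e1, g, h1)"
  shows "qval P i (e2, g, h2) a \<le> qval P i (e1, g, h1) a"
proof (cases "i < pN P")
  case True
  have "u P (Suc i) (e2', g', h) \<le> u P (Suc i) (e1', g', h)"
    if "0 \<le> e1'" "e1' \<le> e2'" "h \<in> chan_levels P" for e1' e2' g' h
    unfolding u_def using Vto_antimono[OF assms(1)] that chan_levels_pos[OF assms(1)] by blast
  with True show ?thesis
    unfolding qval_def using bellman_q_antimono[OF assms(1) _ assms(2-6)]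
    by (simp add: bellman_q_def)
next
  case False
  then show ?thesis
    unfolding qval_def by (simp add: cost_indep_energy_chanH[of P e2 g h2 a e1 h1])
qed

lemma qval_zero_indep_chanH: "qval P i (e, g, h1) 0 = qval P i (e, g, h2) 0"
  unfolding qval_def cost_def cbase_def pinvG_def trans_def by simp

lemma u_eq_Min_qval:
  assumes "i \<le> pN P"
  shows "u P i s = Min (qval P i s ` actions P s)"
proof (cases "i < pN P")
  case True
  then have "pN P - i = Suc (pN P - Suc i)" by simp
  with True show ?thesis
    unfolding u_def qval_def by simp
next
  case False
  with assms have "pN P - i = 0" by simp
  with False show ?thesis
    unfolding u_def qval_def by simp
qed

lemma optimal_one_iff:
  assumes "i \<le> pN P"
  shows "optimal P i s 1 \<longleftrightarrow> 1 \<in> actions P s \<and> qval P i s 1 \<le> qval P i s 0"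
  unfolding optimal_def u_eq_Min_qval[OF assms] Min_image_actions by auto

theorem proposition3:
  fixes P :: mdp_params and i :: nat and e gG gHm gHp :: real
  assumes "valid_params P"
    and "i \<in> {1..pN P}"
    and "e \<in> energy_levels P"
    and "gG \<in> chan_levels P"
    and "gHm \<in> chan_levels P" and "gHp \<in> chan_levels P"
    and "gHm \<le> gHp"
    and "optimal P i (e, gG, gHm) 1"
  shows "optimal P i (e, gG, gHp) 1"
proof -
  have "i \<le> pN P"
    using assms(2) by simp
  have "0 < gHm"
    using chan_levels_pos[OF assms(1,5)] .
  have "0 \<le> e"
    using energy_levels_nonneg[OF _ assms(3)] assms(1) unfolding valid_params_def by auto
  have assign_m: "1 \<in> actions P (e, gG, gHm)" "qval P i (e, gG, gHm) 1 \<le> qval P i (e, gG, gHm) 0"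
    using assms(8) optimal_one_iff[OF \<open>i \<le> pN P\<close>] by auto
  have "qval P i (e, gG, gHp) 1 \<le> qval P i (e, gG, gHm) 1"
    by (rule qval_antimono[OF assms(1) \<open>0 \<le> e\<close> order_refl \<open>0 < gHm\<close> assms(7) assign_m(1)])
  also have "\<dots> \<le> qval P i (e, gG, gHm) 0"
    by (rule assign_m(2))
  also have "\<dots> = qval P i (e, gG, gHp) 0"
    by (rule qval_zero_indep_chanH)
  finally have "qval P i (e, gG, gHp) 1 \<le> qval P i (e, gG, gHp) 0" .
  moreover have "1 \<in> actions P (e, gG, gHp)"
    using actions_mono[OF assms(1) order_refl \<open>0 < gHm\<close> assms(7)] assign_m(1) by blast
  ultimately show ?thesis
    using optimal_one_iff[OF \<open>i \<le> pN P\<close>] by blast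
qed

end
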